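(* Let $d\ge3$ be an integer. The function $$q_d(\gamma)=\frac{1-\frac{F^*(d^2-1,\gamma)}{(d-1)^2}}{1-\gamma}$$ on the interval $-\frac1{d-1}\le\gamma<1$ attains its minimum at $\gamma=-\frac1{d-1}$.
   Context: For an integer $k\ge1$ and $\gamma\in[-1,1]$, $$F^*(k,\gamma)=\frac{2\gamma}{k}\left(\frac{\Gamma((k+1)/2)}{\Gamma(k/2)}\right)^2 {}_2F_1\!\left(\tfrac12,\tfrac12;\tfrac k2+1;\gamma^2\right),$$ where ${}_2F_1$ is the Gaussian hypergeometric function. *)

theory Defs
  imports "HOL-Analysis.Analysis"
begin

definition hyp2F1 :: "real \<Rightarrow> real \<Rightarrow> real \<Rightarrow> real \<Rightarrow> real" where
  "hyp2F1 a b c z = (\<Sum>n. pochhammer a n * pochhammer b n / (pochhammer c n * fact n) * z ^ n)"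

definition Fstar :: "nat \<Rightarrow> real \<Rightarrow> real" where
  "Fstar k \<gamma> = 2 * \<gamma> / real k * (Gamma ((real k + 1) / 2) / Gamma (real k / 2))\<^sup>2
      * hyp2F1 (1/2) (1/2) (real k / 2 + 1) (\<gamma>\<^sup>2)"

definition q :: "nat \<Rightarrow> real \<Rightarrow> real" where
  "q d \<gamma> = (1 - Fstar (d\<^sup>2 - 1) \<gamma> / (real d - 1)\<^sup>2) / (1 - \<gamma>)"

end

theory Submission imports Defs "HOL-Real_Asymp.Real_Asymp" begin

text \<open>Write \<open>q\<^sub>d(\<gamma>) = (1 - B \<gamma> H(\<gamma>\<^sup>2)) / (1 - \<gamma>)\<close> with \<open>H = \<^sub>2F\<^sub>1(1/2,1/2;c;\<cdot>)\<close>,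
  \<open>c = (d\<^sup>2+1)/2\<close> and \<open>t = 1/(d-1)\<close>. Comparing \<open>q\<^sub>d(-t) \<le> q\<^sub>d(\<gamma>)\<close> amounts to
  \<open>B ((1-\<gamma>) t H(t\<^sup>2) + (1+t) \<gamma> H(\<gamma>\<^sup>2)) \<le> t + \<gamma>\<close>. Expanding \<open>H\<close>, every odd
  exponent \<open>m\<close> satisfies \<open>(1-\<gamma>) t\<^sup>m + (1+t) \<gamma>\<^sup>m \<le> 3/2 (t+\<gamma>)\<close> when \<open>t \<le> 1/2\<close>
  (for \<open>\<gamma> < 0\<close> by the mean value bound with \<open>m t\<^sup>m\<^sup>-\<^sup>1 \<le> 1\<close>), and the coefficients
  of \<open>H\<close> are nonnegative, so it suffices that \<open>B H(1) \<le> 2/3\<close>. Log-convexity of \<open>\<Gamma>\<close>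
  bounds the Gamma quotient in \<open>F\<^sup>*\<close> so that \<open>B \<le> 1/(d-1)\<^sup>2 \<le> 1/4\<close>, and comparing the
  coefficients of \<open>H\<close> with \<open>(1)\<^sub>n/(4)\<^sub>n = 6/((n+1)(n+2)(n+3))\<close> gives \<open>H(1) \<le> 3/2\<close>.\<close>

lemma Gamma_plus_half_square_le:
  fixes x :: real
  assumes x: "x > 0"
  shows "Gamma (x + 1/2) ^ 2 \<le> x * Gamma x ^ 2"
proof -
  have pos: "Gamma (x + 1/2) > 0" "Gamma x > 0" "Gamma (x + 1) > 0"
    using x by auto
  have "(ln \<circ> Gamma) ((1 - 1/2) *\<^sub>R x + (1/2) *\<^sub>R (x + 1))
          \<le> (1 - 1/2) * (ln \<circ> Gamma) x + (1/2) * (ln \<circ> Gamma) (x + 1)"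
    by (rule convex_onD[OF log_convex_Gamma_real]) (use x in auto)
  moreover have "(1 - 1/2) *\<^sub>R x + (1/2) *\<^sub>R (x + 1) = x + 1/2"
    by (simp add: field_simps)
  ultimately have "2 * ln (Gamma (x + 1/2)) \<le> ln (Gamma x) + ln (Gamma (x + 1))"
    by (simp add: algebra_simps)
  also have "\<dots> = ln (Gamma x * Gamma (x + 1))"
    using pos by (intro ln_mult_pos[symmetric])
  finally have "ln (Gamma (x + 1/2) ^ 2) \<le> ln (Gamma x * Gamma (x + 1))"
    by (simp add: ln_realpow)
  then have "Gamma (x + 1/2) ^ 2 \<le> Gamma x * Gamma (x + 1)"
    using pos by (subst (asm) ln_le_cancel_iff) auto
  moreover have "Gamma (x + 1) = x * Gamma x"
    using x by (intro Gamma_plus1) (auto elim!: nonpos_Ints_cases)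
  ultimately show ?thesis
    by (simp add: power2_eq_square algebra_simps)
qed

lemma Gamma_quotient_factor_le_one:
  fixes k :: real
  assumes "k > 0"
  shows "2 / k * (Gamma ((k + 1) / 2) / Gamma (k / 2))\<^sup>2 \<le> 1"
proof -
  have "(Gamma ((k + 1) / 2) / Gamma (k / 2))\<^sup>2 \<le> k / 2"
    using Gamma_plus_half_square_le[of "k/2"] assms
    by (simp add: power_divide divide_le_eq add_divide_distrib)
  then have "2 / k * (Gamma ((k + 1) / 2) / Gamma (k / 2))\<^sup>2 \<le> 2 / k * (k / 2)"
    using assms by (intro mult_left_mono) auto
  then show ?thesis
    using assms by simp
qed

lemma pochhammer_mono:
  fixes a b :: real
  assumes "0 < a" "a \<le> b"
  shows "pochhammer a n \<le> pochhammer b n"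
proof (induction n)
  case (Suc n)
  then show ?case
    using assms by (simp add: pochhammer_rec') (intro mult_mono pochhammer_nonneg; simp)
qed simp

lemma pochhammer_half_le_fact: "pochhammer (1/2 :: real) n \<le> fact n"
  unfolding pochhammer_fact by (rule pochhammer_mono) auto

lemma fact_plus_three:
  "fact (n + 3) = (real n + 1) * (real n + 2) * (real n + 3) * fact n"
  by (simp add: numeral_3_eq_3 algebra_simps)

lemma pochhammer_four: "6 * pochhammer (4 :: real) n = fact (n + 3)"
proof -
  have "fact (3 + n) = pochhammer (1 :: real) 3 * pochhammer 4 n"
    unfolding pochhammer_fact pochhammer_product' by simp
  then show ?thesis
    by (simp add: pochhammer_Suc_prod numeral_3_eq_3 add.commute)
qed

definition hyp2F1_coeff :: "real \<Rightarrow> real \<Rightarrow> real \<Rightarrow> nat \<Rightarrow> real" where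
  "hyp2F1_coeff a b c n = pochhammer a n * pochhammer b n / (pochhammer c n * fact n)"

lemma hyp2F1_eq_suminf: "hyp2F1 a b c z = (\<Sum>n. hyp2F1_coeff a b c n * z ^ n)"
  by (simp add: hyp2F1_def hyp2F1_coeff_def)

lemma hyp2F1_coeff_nonneg:
  assumes "0 < a" "0 < b" "0 < c"
  shows "0 \<le> hyp2F1_coeff a b c n"
  unfolding hyp2F1_coeff_def using assms by (simp add: pochhammer_nonneg pochhammer_pos)

lemma hyp2F1_coeff_half_half_le:
  assumes "4 \<le> c"
  shows "hyp2F1_coeff (1/2) (1/2) c n \<le> 6 / ((real n + 1) * (real n + 2) * (real n + 3))"
proof -
  have pos: "0 < pochhammer c n" "0 < pochhammer (4 :: real) n"
    using assms by (auto intro: pochhammer_pos)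
  have "hyp2F1_coeff (1/2) (1/2) c n \<le> fact n * fact n / (pochhammer c n * fact n)"
    unfolding hyp2F1_coeff_def using pos
    by (intro divide_right_mono mult_mono pochhammer_half_le_fact) (auto simp: pochhammer_nonneg)
  also have "\<dots> = fact n / pochhammer c n"
    by simp
  also have "\<dots> \<le> fact n / pochhammer 4 n"
    using assms pos by (intro divide_left_mono pochhammer_mono) auto
  also have "\<dots> = 6 / ((real n + 1) * (real n + 2) * (real n + 3))"
  proof -
    have "pochhammer 4 n = (real n + 1) * (real n + 2) * (real n + 3) * fact n / 6"
      using pochhammer_four[of n] unfolding fact_plus_three by linarith
    moreover have "(real n + 1) * (real n + 2) * (real n + 3) > 0"
      by simp
    ultimately show ?thesis
      using pos(2) by (subst frac_eq_eq) (auto simp: ac_simps)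
  qed
  finally show ?thesis .
qed

lemma sums_six_div_consecutive_triple:
  "(\<lambda>n. 6 / ((real n + 1) * (real n + 2) * (real n + 3))) sums (3/2)"
proof -
  define f :: "nat \<Rightarrow> real" where "f n = -3 / ((real n + 1) * (real n + 2))" for n
  have "f \<longlonglongrightarrow> 0"
    unfolding f_def by real_asymp
  then have "(\<lambda>n. f (Suc n) - f n) sums (0 - f 0)"
    by (rule telescope_sums)
  moreover have "f (Suc n) - f n = 6 / ((real n + 1) * (real n + 2) * (real n + 3))" for n
  proof -
    have "real n + 1 \<noteq> 0" "real n + 2 \<noteq> 0" "real n + 3 \<noteq> 0" "real n + 1 + 1 \<noteq> 0" "real n + 1 + 2 \<noteq> 0"
      by linarith+
    then show ?thesis
      unfolding f_def by (simp add: divide_simps del: of_nat_Suc) (simp add: algebra_simps)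
  qed
  ultimately show ?thesis
    by (simp add: f_def)
qed

lemma summable_hyp2F1_coeff_half_half:
  assumes "4 \<le> c"
  shows "summable (hyp2F1_coeff (1/2) (1/2) c)"
  by (rule summable_comparison_test'[OF sums_summable[OF sums_six_div_consecutive_triple], of 0])
     (use assms hyp2F1_coeff_nonneg hyp2F1_coeff_half_half_le in auto)

lemma hyp2F1_half_half_sums:
  assumes "4 \<le> c" "\<bar>z\<bar> \<le> 1"
  shows "(\<lambda>n. hyp2F1_coeff (1/2) (1/2) c n * z ^ n) sums hyp2F1 (1/2) (1/2) c z"
proof -
  have "summable (\<lambda>n. hyp2F1_coeff (1/2) (1/2) c n * z ^ n)"
  proof (rule summable_comparison_test'[OF summable_hyp2F1_coeff_half_half[OF assms(1)], of 0])
    fix n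
    have "\<bar>z\<bar> ^ n \<le> 1"
      using assms(2) by (simp add: power_le_one)
    then show "norm (hyp2F1_coeff (1/2) (1/2) c n * z ^ n) \<le> hyp2F1_coeff (1/2) (1/2) c n"
      using assms(1) hyp2F1_coeff_nonneg[of "1/2" "1/2" c n]
      by (simp add: abs_mult power_abs mult_left_le)
  qed
  then show ?thesis
    unfolding hyp2F1_eq_suminf by (rule summable_sums)
qed

lemma hyp2F1_half_half_one_le:
  assumes "4 \<le> c"
  shows "hyp2F1 (1/2) (1/2) c 1 \<le> 3/2"
  using sums_le[OF hyp2F1_coeff_half_half_le[OF assms] _ sums_six_div_consecutive_triple]
    hyp2F1_half_half_sums[OF assms, of 1]
  by simp

lemma power_Suc_diff_le:
  fixes s t :: real
  assumes "0 \<le> s" "s \<le> t"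
  shows "t ^ Suc m - s ^ Suc m \<le> real (Suc m) * t ^ m * (t - s)"
proof (induction m)
  case (Suc m)
  have "t ^ Suc (Suc m) - s ^ Suc (Suc m) = t * (t ^ Suc m - s ^ Suc m) + s ^ Suc m * (t - s)"
    by (simp add: algebra_simps)
  also have "\<dots> \<le> t * (real (Suc m) * t ^ m * (t - s)) + t ^ Suc m * (t - s)"
    using assms Suc by (intro add_mono mult_left_mono mult_right_mono power_mono) auto
  also have "\<dots> = real (Suc (Suc m)) * t ^ Suc m * (t - s)"
    by (simp add: algebra_simps)
  finally show ?case .
qed simp

lemma odd_power_combination_le:
  fixes t g :: real
  assumes t: "0 < t" "t \<le> 1/2" and g: "-t \<le> g" "g \<le> 1"
  shows "(1 - g) * t ^ (2*n+1) + (1 + t) * g ^ (2*n+1) \<le> 3/2 * (t + g)"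
proof (cases "0 \<le> g")
  case True
  have "t ^ (2*n+1) \<le> t ^ 1" "g ^ (2*n+1) \<le> g ^ 1"
    using t g True by (intro power_decreasing; simp)+
  then have "(1 - g) * t ^ (2*n+1) + (1 + t) * g ^ (2*n+1) \<le> (1 - g) * t + (1 + t) * g"
    using t g by (intro add_mono mult_left_mono) auto
  then show ?thesis
    using t True by (simp add: algebra_simps)
next
  case False
  define s where "s = -g"
  have s: "0 < s" "s \<le> t"
    using False g s_def by auto
  have "2*n+1 \<le> (2::nat) ^ (2*n)"
    using less_exp[of "2*n"] by linarith
  then have "real (2*n+1) \<le> 2 ^ (2*n)"
    by (metis of_nat_le_iff of_nat_numeral of_nat_power)
  moreover have "t ^ (2*n) \<le> (1/2) ^ (2*n)"
    using t by (intro power_mono) auto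
  ultimately have "real (2*n+1) * t ^ (2*n) \<le> 2 ^ (2*n) * (1/2) ^ (2*n)"
    using t by (intro mult_mono) auto
  then have deriv_le: "real (2*n+1) * t ^ (2*n) \<le> 1"
    by (simp add: power_one_over)
  have "(1 - g) * t ^ (2*n+1) + (1 + t) * g ^ (2*n+1) = (1 + s) * t ^ (2*n+1) - (1 + t) * s ^ (2*n+1)"
    by (simp add: s_def)
  also have "\<dots> \<le> (1 + t) * (t ^ (2*n+1) - s ^ (2*n+1))"
    using mult_right_mono[OF s(2), of "t ^ (2*n+1)"] t by (simp add: algebra_simps)
  also have "\<dots> \<le> 3/2 * (real (2*n+1) * t ^ (2*n) * (t - s))"
  proof (intro mult_mono)
    show "t ^ (2*n+1) - s ^ (2*n+1) \<le> real (2*n+1) * t ^ (2*n) * (t - s)"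
      using power_Suc_diff_le[of s t "2*n"] s by simp
    have "s ^ (2*n+1) \<le> t ^ (2*n+1)"
      using s by (intro power_mono) auto
    then show "0 \<le> t ^ (2*n+1) - s ^ (2*n+1)"
      by simp
  qed (use t s in auto)
  also have "\<dots> \<le> 3/2 * (t - s)"
    using mult_right_mono[OF deriv_le, of "t - s"] s by (intro mult_left_mono) auto
  finally show ?thesis
    by (simp add: s_def)
qed

lemma odd_power_series_quotient_le:
  fixes a :: "nat \<Rightarrow> real" and H :: "real \<Rightarrow> real"
  assumes a: "\<And>n. 0 \<le> a n"
    and H: "\<And>x. \<bar>x\<bar> \<le> 1 \<Longrightarrow> (\<lambda>n. a n * x ^ n) sums H x"
    and B: "0 \<le> B" "B * H 1 \<le> 2/3"
    and t: "0 < t" "t \<le> 1/2" and g: "-t \<le> g" "g < 1"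
  shows "(1 - B * (-t) * H ((-t)\<^sup>2)) / (1 - (-t)) \<le> (1 - B * g * H (g\<^sup>2)) / (1 - g)"
proof -
  have odd: "(\<lambda>n. a n * z ^ (2*n+1)) sums (z * H (z\<^sup>2))" if "\<bar>z\<bar> \<le> 1" for z
  proof -
    have "\<bar>z\<^sup>2\<bar> \<le> 1"
      using that by (simp add: abs_square_le_1)
    then have "(\<lambda>n. z * (a n * (z\<^sup>2) ^ n)) sums (z * H (z\<^sup>2))"
      by (intro sums_mult H)
    moreover have "(\<lambda>n. z * (a n * (z\<^sup>2) ^ n)) = (\<lambda>n. a n * z ^ (2*n+1))"
      by (simp add: fun_eq_iff power_add power_mult power2_eq_square power_mult_distrib)
    ultimately show ?thesis
      by (simp only:)
  qed
  have lhs: "(\<lambda>n. a n * ((1 - g) * t ^ (2*n+1) + (1 + t) * g ^ (2*n+1)))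
      sums ((1 - g) * (t * H (t\<^sup>2)) + (1 + t) * (g * H (g\<^sup>2)))"
    using sums_add[OF sums_mult[OF odd[of t], of "1 - g"] sums_mult[OF odd[of g], of "1 + t"]] t g
    by (simp add: algebra_simps)
  have "a sums H 1"
    using H[of 1] by simp
  then have rhs: "(\<lambda>n. a n * (3/2 * (t + g))) sums (H 1 * (3/2 * (t + g)))"
    by (rule sums_mult2)
  have series_le: "(1 - g) * (t * H (t\<^sup>2)) + (1 + t) * (g * H (g\<^sup>2)) \<le> H 1 * (3/2 * (t + g))"
  proof (rule sums_le[OF _ lhs rhs])
    fix n
    show "a n * ((1 - g) * t ^ (2*n+1) + (1 + t) * g ^ (2*n+1)) \<le> a n * (3/2 * (t + g))"
      using odd_power_combination_le[of t g n] a[of n] t g by (intro mult_left_mono) auto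
  qed
  have "B * ((1 - g) * (t * H (t\<^sup>2)) + (1 + t) * (g * H (g\<^sup>2))) \<le> (B * H 1) * (3/2 * (t + g))"
    using mult_left_mono[OF series_le B(1)] by (simp only: mult.assoc)
  also have "\<dots> \<le> 2/3 * (3/2 * (t + g))"
    using B g by (intro mult_right_mono) auto
  finally have "(1 + B * t * H (t\<^sup>2)) * (1 - g) \<le> (1 - B * g * H (g\<^sup>2)) * (1 + t)"
    by (simp add: algebra_simps)
  then show ?thesis
    using t g by (simp add: divide_le_eq le_divide_eq mult.commute)
qed

theorem mainTheorem5:
  fixes d :: nat
  assumes "d \<ge> 3"
  shows "\<forall>\<gamma>. -1 / (real d - 1) \<le> \<gamma> \<and> \<gamma> < 1 \<longrightarrow> q d (-1 / (real d - 1)) \<le> q d \<gamma>"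
proof (intro allI impI)
  fix \<gamma> :: real
  assume \<gamma>: "-1 / (real d - 1) \<le> \<gamma> \<and> \<gamma> < 1"
  define k where "k = real (d\<^sup>2 - 1)"
  define c where "c = k / 2 + 1"
  define B where "B = 2 / k * (Gamma ((k + 1) / 2) / Gamma (k / 2))\<^sup>2 / (real d - 1)\<^sup>2"
  define t where "t = 1 / (real d - 1)"
  have d: "3 \<le> real d" "4 \<le> (real d - 1)\<^sup>2"
    using assms power_mono[of 2 "real d - 1" 2] by auto
  have "8 \<le> k"
    using power_mono[of 3 "real d" 2] d unfolding k_def by simp
  then have c: "4 \<le> c"
    unfolding c_def by simp
  have B: "0 \<le> B"
    using \<open>8 \<le> k\<close> unfolding B_def by simp
  have "B \<le> 1 / (real d - 1)\<^sup>2"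
    unfolding B_def using Gamma_quotient_factor_le_one[of k] \<open>8 \<le> k\<close> by (intro divide_right_mono) auto
  also have "\<dots> \<le> 1/4"
    using d by (intro divide_left_mono) auto
  finally have "B * (3/2) \<le> 2/3"
    by linarith
  moreover have "B * hyp2F1 (1/2) (1/2) c 1 \<le> B * (3/2)"
    using hyp2F1_half_half_one_le[OF c] B by (rule mult_left_mono)
  moreover have "0 < t" "t \<le> 1/2" "-t \<le> \<gamma>"
    using d \<gamma> unfolding t_def by (auto simp: divide_le_eq)
  ultimately have "(1 - B * (-t) * hyp2F1 (1/2) (1/2) c ((-t)\<^sup>2)) / (1 - (-t))
      \<le> (1 - B * \<gamma> * hyp2F1 (1/2) (1/2) c (\<gamma>\<^sup>2)) / (1 - \<gamma>)"
    using B \<gamma> c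
    by (intro odd_power_series_quotient_le[where a = "hyp2F1_coeff (1/2) (1/2) c"]
        hyp2F1_coeff_nonneg hyp2F1_half_half_sums) auto
  moreover have "q d z = (1 - B * z * hyp2F1 (1/2) (1/2) c (z\<^sup>2)) / (1 - z)" for z
    unfolding q_def Fstar_def B_def c_def k_def by (simp add: algebra_simps)
  ultimately show "q d (-1 / (real d - 1)) \<le> q d \<gamma>"
    unfolding t_def by simp
qed

end
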